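(* Let $(M^3,J,\theta)$ be a pseudohermitian 3-manifold with frame $Z_1$, coframe $\theta^1$, connection form $\theta_1{}^1$ and torsion $A^1{}_{\bar1}$ as in the context, and let $\phi\in C^\infty(M)$ be complex with $|\phi|<1$. Let $F=(1-|\phi|^2)^{-1/2}$ and consider the CR structure spanned by $Z_{\bar1}^\phi=F(Z_{\bar1}+\phi Z_1)$ with the same contact form $\theta$ and admissible coframe $\theta^1_\phi=F(\theta^1-\phi\theta^{\bar1})$ (so that $d\theta=i\theta^1_\phi\wedge\theta^{\bar1}_\phi$). Then its Tanaka–Webster connection form $\theta_1{}^1{}_\phi$ and torsion $A^1{}_{\bar1}{}^\phi$ (defined by $\tau^1_\phi=A^1{}_{\bar1}{}^\phi\theta^{\bar1}_\phi$) are $$\theta_1{}^1{}_\phi=\theta_1{}^1-F^{-1}dF-F^{-1}(B_{11}\theta^1+B_{12}\theta^{\bar1}+B_{13}\theta),$$ $$A^1{}_{\bar1}{}^\phi=A^1{}_{\bar1}-F^2\big(\phi_0+\phi\theta_1{}^1(T)-\phi\theta_{\bar1}{}^{\bar1}(T)+\phi^2A^{\bar1}{}_1-|\phi|^2A^1{}_{\bar1}\big),$$ where $B_{11}=F^2\big(-2F_1-\bar\phi F\theta_{\bar1}{}^{\bar1}(Z_{\bar1})+\bar\phi F\theta_1{}^1(Z_{\bar1})-F\bar\phi_{\bar1}-\bar\phi F\phi_1-2\bar\phi F_{\bar1}-|\phi|^2F\theta_1{}^1(Z_1)+|\phi|^2F\theta_{\bar1}{}^{\bar1}(Z_1)\big)$,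 $B_{12}=F^2\big(2|\phi|^2F_{\bar1}+\phi F\theta_1{}^1(Z_1)-\phi F\theta_{\bar1}{}^{\bar1}(Z_1)+F\phi_1+\phi F\bar\phi_{\bar1}+2\phi F_1+|\phi|^2F\theta_{\bar1}{}^{\bar1}(Z_{\bar1})-|\phi|^2F\theta_1{}^1(Z_{\bar1})\big)$, $B_{13}=F^3\big(-\bar\phi(\phi_0+\phi\theta_1{}^1(T)-\phi\theta_{\bar1}{}^{\bar1}(T))+\bar\phi A^1{}_{\bar1}-\phi A^{\bar1}{}_1\big)$.
   Context: $\theta$ contact form, $T$ Reeb field, $Z_1$ local frame of $T_{1,0}$, $Z_{\bar1}=\overline{Z_1}$, $\{\theta,\theta^1,\theta^{\bar1}\}$ dual to $\{T,Z_1,Z_{\bar1}\}$ with $d\theta=i\theta^1\wedge\theta^{\bar1}$. For a coframe $\{\theta,\vartheta^1,\vartheta^{\bar1}\}$ with $d\theta=i\vartheta^1\wedge\vartheta^{\bar1}$, the connection form $\vartheta_1{}^1$ and torsion form $\tau^1$ are uniquely determined by $d\vartheta^1=\vartheta^1\wedge\vartheta_1{}^1+\theta\wedge\tau^1$, $\tau^1\equiv0\bmod\vartheta^{\bar1}$, $\vartheta_1{}^1+\vartheta_{\bar1}{}^{\bar1}=0$. For the original coframe, $\tau^1=A^1{}_{\bar1}\theta^{\bar1}$; $A^{\bar1}{}_1=\overline{A^1{}_{\bar1}}$, $\theta_{\bar1}{}^{\bar1}=\overline{\theta_1{}^1}$. Notation: $\phi_1=Z_1\phi$, $\bar\phi_{\bar1}=Z_{\bar1}\bar\phi$,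 $F_1=Z_1F$, $F_{\bar1}=Z_{\bar1}F$, $\phi_0=T\phi$. *)

theory Defs
  imports Complex_Main
begin

text \<open>A 1-form is stored by its coefficients with respect to the coframe
  (theta, theta^1, theta^{1bar}); a 2-form by its coefficients with respect to
  (theta ^ theta^1, theta ^ theta^{1bar}, theta^1 ^ theta^{1bar}).\<close>

type_synonym 'm fn = "'m \<Rightarrow> complex"
type_synonym 'm form1 = "'m fn \<times> 'm fn \<times> 'm fn"
type_synonym 'm form2 = "'m fn \<times> 'm fn \<times> 'm fn"

definition cnjf :: "'m fn \<Rightarrow> 'm fn" where
  "cnjf f = (\<lambda>x. cnj (f x))"

definition cfn :: "complex \<Rightarrow> 'm fn" where
  "cfn c = (\<lambda>_. c)"

definition zbar :: "('m fn \<Rightarrow> 'm fn) \<Rightarrow> ('m fn \<Rightarrow> 'm fn)" where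
  "zbar Z f = cnjf (Z (cnjf f))"

definition derivation_on :: "'m fn set \<Rightarrow> ('m fn \<Rightarrow> 'm fn) \<Rightarrow> bool" where
  "derivation_on S D \<longleftrightarrow>
     (\<forall>f\<in>S. D f \<in> S) \<and> (\<forall>c. D (cfn c) = cfn 0) \<and>
     (\<forall>f\<in>S. \<forall>g\<in>S. D (\<lambda>x. f x + g x) = (\<lambda>x. D f x + D g x)) \<and>
     (\<forall>f\<in>S. \<forall>g\<in>S. D (\<lambda>x. f x * g x) = (\<lambda>x. f x * D g x + g x * D f x))"

definition function_algebra :: "'m fn set \<Rightarrow> bool" where
  "function_algebra S \<longleftrightarrow> (\<forall>c. cfn c \<in> S) \<and>
     (\<forall>f\<in>S. \<forall>g\<in>S. (\<lambda>x. f x + g x) \<in> S \<and> (\<lambda>x. f x * g x) \<in> S) \<and>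
     (\<forall>f\<in>S. cnjf f \<in> S)"

definition zero1 :: "'m form1" where "zero1 = (cfn 0, cfn 0, cfn 0)"
definition theta0 :: "'m form1" where "theta0 = (cfn 1, cfn 0, cfn 0)"
definition theta1 :: "'m form1" where "theta1 = (cfn 0, cfn 1, cfn 0)"
definition theta1bar :: "'m form1" where "theta1bar = (cfn 0, cfn 0, cfn 1)"

definition add1 :: "'m form1 \<Rightarrow> 'm form1 \<Rightarrow> 'm form1" where
  "add1 a b = (case a of (a0,a1,a2) \<Rightarrow> case b of (b0,b1,b2) \<Rightarrow>
     (\<lambda>x. a0 x + b0 x, \<lambda>x. a1 x + b1 x, \<lambda>x. a2 x + b2 x))"
definition scale1 :: "'m fn \<Rightarrow> 'm form1 \<Rightarrow> 'm form1" where
  "scale1 f a = (case a of (a0,a1,a2) \<Rightarrow>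
     (\<lambda>x. f x * a0 x, \<lambda>x. f x * a1 x, \<lambda>x. f x * a2 x))"
definition sub1 :: "'m form1 \<Rightarrow> 'm form1 \<Rightarrow> 'm form1" where
  "sub1 a b = add1 a (scale1 (cfn (-1)) b)"

text \<open>Complex conjugate of a 1-form (theta real, conj theta^1 = theta^{1bar}).\<close>
definition conj1 :: "'m form1 \<Rightarrow> 'm form1" where
  "conj1 a = (case a of (a0,a1,a2) \<Rightarrow> (cnjf a0, cnjf a2, cnjf a1))"

definition evT :: "'m form1 \<Rightarrow> 'm fn" where "evT a = fst a"
definition evZ1 :: "'m form1 \<Rightarrow> 'm fn" where "evZ1 a = fst (snd a)"
definition evZ1b :: "'m form1 \<Rightarrow> 'm fn" where "evZ1b a = snd (snd a)"

definition add2 :: "'m form2 \<Rightarrow> 'm form2 \<Rightarrow> 'm form2" where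
  "add2 a b = (case a of (a0,a1,a2) \<Rightarrow> case b of (b0,b1,b2) \<Rightarrow>
     (\<lambda>x. a0 x + b0 x, \<lambda>x. a1 x + b1 x, \<lambda>x. a2 x + b2 x))"
definition scale2 :: "'m fn \<Rightarrow> 'm form2 \<Rightarrow> 'm form2" where
  "scale2 f a = (case a of (a0,a1,a2) \<Rightarrow>
     (\<lambda>x. f x * a0 x, \<lambda>x. f x * a1 x, \<lambda>x. f x * a2 x))"
text \<open>conj(theta^theta^1) = theta^theta^{1bar}, conj(theta^1^theta^{1bar}) = - theta^1^theta^{1bar}.\<close>
definition conj2 :: "'m form2 \<Rightarrow> 'm form2" where
  "conj2 a = (case a of (a0,a1,a2) \<Rightarrow> (cnjf a1, cnjf a0, \<lambda>x. - cnj (a2 x)))"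

definition wedge :: "'m form1 \<Rightarrow> 'm form1 \<Rightarrow> 'm form2" where
  "wedge a b = (case a of (a0,a1,a2) \<Rightarrow> case b of (b0,b1,b2) \<Rightarrow>
     (\<lambda>x. a0 x * b1 x - a1 x * b0 x,
      \<lambda>x. a0 x * b2 x - a2 x * b0 x,
      \<lambda>x. a1 x * b2 x - a2 x * b1 x))"

definition dfun :: "('m fn \<Rightarrow> 'm fn) \<Rightarrow> ('m fn \<Rightarrow> 'm fn) \<Rightarrow> 'm fn \<Rightarrow> 'm form1" where
  "dfun T Z f = (T f, Z f, zbar Z f)"

text \<open>d theta = i theta^1 ^ theta^{1bar}.\<close>
definition dtheta :: "'m form2" where "dtheta = (cfn 0, cfn 0, cfn \<i>)"

text \<open>Exterior derivative of a 1-form, given d theta^1 = D (and d theta^{1bar} = conj D).\<close>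
definition d1 :: "('m fn \<Rightarrow> 'm fn) \<Rightarrow> ('m fn \<Rightarrow> 'm fn) \<Rightarrow> 'm form2 \<Rightarrow> 'm form1 \<Rightarrow> 'm form2" where
  "d1 T Z D a = (case a of (a0,a1,a2) \<Rightarrow>
     add2 (add2 (add2 (wedge (dfun T Z a0) theta0) (scale2 a0 dtheta))
                (add2 (wedge (dfun T Z a1) theta1) (scale2 a1 D)))
          (add2 (wedge (dfun T Z a2) theta1bar) (scale2 a2 (conj2 D))))"

definition tw_structure ::
  "('m fn \<Rightarrow> 'm fn) \<Rightarrow> ('m fn \<Rightarrow> 'm fn) \<Rightarrow> 'm form2 \<Rightarrow> 'm form1 \<Rightarrow> 'm form1 \<Rightarrow> 'm form1 \<Rightarrow> bool" where
  "tw_structure T Z D vt omega tau \<longleftrightarrow>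
     d1 T Z D vt = add2 (wedge vt omega) (wedge theta0 tau) \<and>
     (\<exists>g. tau = scale1 g (conj1 vt)) \<and>
     add1 omega (conj1 omega) = zero1"

definition tw_connection ::
  "('m fn \<Rightarrow> 'm fn) \<Rightarrow> ('m fn \<Rightarrow> 'm fn) \<Rightarrow> 'm form2 \<Rightarrow> 'm form1 \<Rightarrow> 'm form1" where
  "tw_connection T Z D vt = (THE omega. \<exists>tau. tw_structure T Z D vt omega tau)"

definition tw_torsion ::
  "('m fn \<Rightarrow> 'm fn) \<Rightarrow> ('m fn \<Rightarrow> 'm fn) \<Rightarrow> 'm form2 \<Rightarrow> 'm form1 \<Rightarrow> 'm form1" where
  "tw_torsion T Z D vt = (THE tau. \<exists>omega. tw_structure T Z D vt omega tau)"

end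

(* The Tanaka-Webster connection and torsion of an admissible coframe (theta, vt, conj vt)
   with vt = a theta^1 + b theta^{1bar} and |a| <> |b| are determined by the structure
   equations: the difference of two solutions solves a homogeneous linear system with
   determinant |a|^2 - |b|^2.  So it suffices to verify the structure equations for the
   proposed connection and torsion of theta^1_phi = F (theta^1 - phi theta^{1bar}).
   Expanding d theta^1_phi with d theta^1 = theta^1 ^ theta_1^1 + A theta ^ theta^{1bar},
   this reduces to polynomial identities, using F^2 (1 - |phi|^2) = 1, its derivative
   2 T F = F^3 T |phi|^2, and that theta_1^1 is imaginary. *)

theory Submission
  imports Defs
begin

lemma derivation_on_const [simp]: "derivation_on S D \<Longrightarrow> D (\<lambda>_. c) = (\<lambda>_. 0)"
  by (simp add: derivation_on_def cfn_def)

lemma derivation_on_add: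
  "derivation_on S D \<Longrightarrow> f \<in> S \<Longrightarrow> g \<in> S \<Longrightarrow> D (\<lambda>x. f x + g x) = (\<lambda>x. D f x + D g x)"
  by (simp add: derivation_on_def)

lemma derivation_on_mult:
  "derivation_on S D \<Longrightarrow> f \<in> S \<Longrightarrow> g \<in> S \<Longrightarrow> D (\<lambda>x. f x * g x) = (\<lambda>x. f x * D g x + g x * D f x)"
  by (simp add: derivation_on_def)

lemma function_algebra_const: "function_algebra S \<Longrightarrow> (\<lambda>_. c) \<in> S"
  unfolding function_algebra_def cfn_def by blast

lemma function_algebra_mult: "function_algebra S \<Longrightarrow> f \<in> S \<Longrightarrow> g \<in> S \<Longrightarrow> (\<lambda>x. f x * g x) \<in> S"
  by (simp add: function_algebra_def)

lemma function_algebra_cnj: "function_algebra S \<Longrightarrow> f \<in> S \<Longrightarrow> (\<lambda>x. cnj (f x)) \<in> S"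
  by (simp add: function_algebra_def cnjf_def)

lemma derivation_on_uminus:
  assumes "function_algebra S" "derivation_on S D" "f \<in> S"
  shows "D (\<lambda>x. - f x) = (\<lambda>x. - D f x)"
  using derivation_on_mult[OF assms(2) function_algebra_const[OF assms(1)] assms(3), of "-1"]
    assms(2) by simp

lemma zbar_const [simp]: "derivation_on S Z \<Longrightarrow> zbar Z (\<lambda>_. c) = (\<lambda>_. 0)"
  using derivation_on_const[of S Z "cnj c"] by (simp add: zbar_def cnjf_def)

lemma zbar_cnj: "zbar Z (\<lambda>x. cnj (f x)) = (\<lambda>x. cnj (Z f x))"
  by (simp add: zbar_def cnjf_def)

lemma zbar_real: "(\<And>x. cnj (f x) = f x) \<Longrightarrow> zbar Z f = (\<lambda>x. cnj (Z f x))"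
  using zbar_cnj[of Z f] by simp

lemma derivation_on_inverse_sqrt:
  assumes alg: "function_algebra S" and der: "derivation_on S D"
    and FS: "F \<in> S" and PS: "P \<in> S" and unit: "\<And>x. (F x)\<^sup>2 * (1 - P x) = 1"
  shows "2 * D F x = F x ^ 3 * D P x"
proof -
  have F2S: "(\<lambda>x. F x * F x) \<in> S" and F2PS: "(\<lambda>x. F x * F x * P x) \<in> S"
    using function_algebra_mult[OF alg] FS PS by blast+
  have "(\<lambda>x. F x * F x) = (\<lambda>x. 1 + F x * F x * P x)"
  proof
    fix y show "F y * F y = 1 + F y * F y * P y" using unit[of y] by algebra
  qed
  then have "D (\<lambda>x. F x * F x) = D (\<lambda>x. 1 + F x * F x * P x)" by simp
  then have "2 * F x * D F x * (1 - P x) = (F x)\<^sup>2 * D P x"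
    using derivation_on_add[OF der function_algebra_const[OF alg] F2PS]
      derivation_on_mult[OF der F2S PS] derivation_on_mult[OF der FS FS] der
    by (auto simp: fun_eq_iff power2_eq_square algebra_simps dest: spec[of _ x])
  then show ?thesis using unit[of x] by algebra
qed

lemma d1_horizontal:
  assumes "derivation_on S T" "derivation_on S Z"
  shows "d1 T Z (D0, D1, D2) (cfn 0, f, g) =
    (\<lambda>x. T f x + f x * D0 x + g x * cnj (D1 x),
     \<lambda>x. T g x + f x * D1 x + g x * cnj (D0 x),
     \<lambda>x. Z g x - zbar Z f x + f x * D2 x - g x * cnj (D2 x))"
  using assms
  by (simp add: d1_def dfun_def wedge_def add2_def scale2_def conj2_def cnjf_def cfn_def
      theta0_def theta1_def theta1bar_def dtheta_def fun_eq_iff algebra_simps)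

lemma tw_structure_theta1_dtheta1:
  assumes "derivation_on S T" "derivation_on S Z"
    and "tw_structure T Z D theta1 omega (scale1 A theta1bar)"
  shows "D = (\<lambda>x. - evT omega x, A, evZ1b omega)"
proof -
  obtain D0 D1 D2 where D: "D = (D0, D1, D2)" by (cases D) auto
  have "d1 T Z D theta1 = add2 (wedge theta1 omega) (wedge theta0 (scale1 A theta1bar))"
    using assms(3) by (simp add: tw_structure_def)
  then show ?thesis
    using d1_horizontal[OF assms(1,2), of D0 D1 D2 "cfn 1" "cfn 0"] assms(1,2)
    by (simp add: D theta1_def theta0_def theta1bar_def wedge_def add2_def scale1_def
        evT_def evZ1b_def cfn_def case_prod_unfold fun_eq_iff)
qed

lemma add1_conj1_eq_zero1_iff:
  "add1 (a0, a1, a2) (conj1 (a0, a1, a2)) = zero1 \<longleftrightarrow>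
     (\<forall>x. cnj (a0 x) = - a0 x \<and> cnj (a2 x) = - a1 x)"
  unfolding add1_def conj1_def zero1_def cfn_def cnjf_def
  by (auto simp: fun_eq_iff add_eq_0_iff2) (metis complex_cnj_cnj complex_cnj_minus)+

lemma cnj_eq_minus_swap: "cnj a = - b \<Longrightarrow> cnj b = - (a :: complex)"
  by (metis complex_cnj_cnj complex_cnj_minus minus_minus)

lemma tw_structure_unique:
  assumes nondeg: "\<And>x. a x * cnj (a x) \<noteq> b x * cnj (b x)"
    and st: "tw_structure T Z D (cfn 0, a, b) omega tau"
    and st': "tw_structure T Z D (cfn 0, a, b) omega' tau'"
  shows "omega' = omega \<and> tau' = tau"
proof -
  obtain w0 w1 w2 where omega: "omega = (w0, w1, w2)" by (cases omega) auto
  obtain v0 v1 v2 where omega': "omega' = (v0, v1, v2)" by (cases omega') auto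
  obtain g where tau: "tau = scale1 g (conj1 (cfn 0, a, b))"
    using st by (auto simp: tw_structure_def)
  obtain h where tau': "tau' = scale1 h (conj1 (cfn 0, a, b))"
    using st' by (auto simp: tw_structure_def)
  have imag: "cnj (w0 x) = - w0 x" "cnj (w2 x) = - w1 x"
    "cnj (v0 x) = - v0 x" "cnj (v2 x) = - v1 x" for x
    using st st' by (auto simp: tw_structure_def omega omega' add1_conj1_eq_zero1_iff)
  have "add2 (wedge (cfn 0, a, b) omega') (wedge theta0 tau') =
        add2 (wedge (cfn 0, a, b) omega) (wedge theta0 tau)"
    using st st' by (simp add: tw_structure_def)
  then have eqs: "a x * (v0 x - w0 x) = (h x - g x) * cnj (b x)"
    "b x * (v0 x - w0 x) = (h x - g x) * cnj (a x)"
    "a x * (v2 x - w2 x) = b x * (v1 x - w1 x)" for x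
    by (simp_all add: omega omega' tau tau' wedge_def add2_def scale1_def conj1_def theta0_def
        cnjf_def cfn_def fun_eq_iff algebra_simps)
  have "v0 x = w0 x \<and> h x = g x" for x
    using eqs(1,2)[of x] nondeg[of x] by algebra
  moreover have "v1 x = w1 x \<and> v2 x = w2 x" for x
  proof -
    have "cnj (v2 x - w2 x) = - (v1 x - w1 x)" using imag(2,4)[of x] by simp
    from cnj_eq_minus_swap[OF this] have e2: "v2 x - w2 x = - cnj (v1 x - w1 x)" by simp
    have "cnj (a x * (v2 x - w2 x)) = cnj (b x * (v1 x - w1 x))"
      using eqs(3) by simp
    then have "cnj (a x) * (v1 x - w1 x) = - cnj (b x) * cnj (v1 x - w1 x)"
      by (simp add: e2 algebra_simps)
    then have "v1 x - w1 x = 0"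
      using eqs(3)[of x] nondeg[of x] unfolding e2 by algebra
    then show ?thesis using e2 by simp
  qed
  ultimately have "v0 = w0" "v1 = w1" "v2 = w2" "h = g"
    by (simp_all add: fun_eq_iff)
  then show ?thesis by (simp add: omega omega' tau tau')
qed

lemma tw_structure_determines:
  assumes "\<And>x. a x * cnj (a x) \<noteq> b x * cnj (b x)"
    and "tw_structure T Z D (cfn 0, a, b) omega tau"
  shows "tw_connection T Z D (cfn 0, a, b) = omega \<and> tw_torsion T Z D (cfn 0, a, b) = tau"
proof -
  have "omega' = omega \<and> tau' = tau" if "tw_structure T Z D (cfn 0, a, b) omega' tau'" for omega' tau'
    using tw_structure_unique[OF assms(1,2) that] .
  then show ?thesis
    unfolding tw_connection_def tw_torsion_def using assms(2)
    by (intro conjI the_equality) blast+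
qed

lemma powr_neg_half_norm_sq:
  assumes "cmod z < 1"
  shows "(complex_of_real ((1 - (cmod z)\<^sup>2) powr (-1/2)))\<^sup>2 * (1 - z * cnj z) = 1"
proof -
  define r where "r = 1 - (cmod z)\<^sup>2"
  have "r > 0" using assms unfolding r_def by (simp add: abs_square_less_1)
  then have "(r powr (-1/2))\<^sup>2 * r = 1"
    by (simp add: power2_eq_square powr_add[symmetric] powr_minus_divide)
  moreover have "1 - z * cnj z = complex_of_real r"
    unfolding r_def by (metis complex_norm_square of_real_1 of_real_diff)
  ultimately show ?thesis
    unfolding r_def[symmetric] by (metis of_real_1 of_real_mult of_real_power)
qed

(* B11, B12, B13, Aphi are the coefficients of the proposition, simplified using
   cnj w0 = - w0 and cnj w2 = - w1. *)
lemma tw_structure_rescaled_coframe: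
  fixes phi F A w0 w1 w2 B11 B12 B13 Aphi :: "'m fn"
  assumes alg: "function_algebra S"
    and derT: "derivation_on S T" and derZ: "derivation_on S Z"
    and phiS: "phi \<in> S" and FS: "F \<in> S"
    and T_cnj: "T (\<lambda>x. cnj (phi x)) = (\<lambda>x. cnj (T phi x))"
    and imag: "\<And>x. cnj (w0 x) = - w0 x" "\<And>x. cnj (w2 x) = - w1 x"
    and F_real: "\<And>x. cnj (F x) = F x"
    and unit: "\<And>x. (F x)\<^sup>2 * (1 - phi x * cnj (phi x)) = 1"
    and B11: "\<And>x. B11 x = (F x)\<^sup>2 * (- 2 * Z F x + 2 * cnj (phi x) * F x * w2 x
        - F x * cnj (Z phi x) - cnj (phi x) * F x * Z phi x - 2 * cnj (phi x) * cnj (Z F x)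
        - 2 * phi x * cnj (phi x) * F x * w1 x)"
    and B12: "\<And>x. B12 x = (F x)\<^sup>2 * (2 * phi x * cnj (phi x) * cnj (Z F x)
        + 2 * phi x * F x * w1 x + F x * Z phi x + phi x * F x * cnj (Z phi x)
        + 2 * phi x * Z F x - 2 * phi x * cnj (phi x) * F x * w2 x)"
    and B13: "\<And>x. B13 x = F x ^ 3 * (- cnj (phi x) * (T phi x + 2 * phi x * w0 x)
        + cnj (phi x) * A x - phi x * cnj (A x))"
    and Aphi: "\<And>x. Aphi x = A x - (F x)\<^sup>2 * (T phi x + 2 * phi x * w0 x
        + (phi x)\<^sup>2 * cnj (A x) - phi x * cnj (phi x) * A x)"
  shows "tw_structure T Z (\<lambda>x. - w0 x, A, w2) (cfn 0, F, \<lambda>x. - (F x * phi x))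
     (sub1 (sub1 (w0, w1, w2) (scale1 (\<lambda>x. inverse (F x)) (dfun T Z F)))
        (scale1 (\<lambda>x. inverse (F x))
           (add1 (add1 (scale1 B11 theta1) (scale1 B12 theta1bar)) (scale1 B13 theta0))))
     (scale1 Aphi (conj1 (cfn 0, F, \<lambda>x. - (F x * phi x))))"
    (is "tw_structure _ _ ?D ?vt ?omega ?tau")
proof -
  have cphiS: "(\<lambda>x. cnj (phi x)) \<in> S" using function_algebra_cnj[OF alg phiS] .
  have Fphi: "(\<lambda>x. F x * phi x) \<in> S" using function_algebra_mult[OF alg FS phiS] .
  have F_inverse: "F x * inverse (F x) = 1" for x
    using unit[of x] by (cases "F x = 0") auto
  have TF: "2 * T F x = F x ^ 3 * (cnj (phi x) * T phi x + phi x * cnj (T phi x))" for x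
    using derivation_on_inverse_sqrt[OF alg derT FS function_algebra_mult[OF alg phiS cphiS] unit]
      derivation_on_mult[OF derT phiS cphiS] T_cnj by simp
  have TF_real: "cnj (T F x) = T F x" for x
  proof -
    have "cnj (2 * T F x) = cnj (F x ^ 3 * (cnj (phi x) * T phi x + phi x * cnj (T phi x)))"
      by (simp only: TF)
    also have "\<dots> = 2 * T F x"
      by (simp add: TF F_real algebra_simps)
    finally show ?thesis by simp
  qed
  have d_vt: "d1 T Z ?D ?vt =
    (\<lambda>x. T F x - F x * w0 x - F x * phi x * cnj (A x),
     \<lambda>x. F x * A x - (F x * T phi x + phi x * T F x) - F x * phi x * w0 x,
     \<lambda>x. - cnj (Z F x) + F x * w2 x - (F x * Z phi x + phi x * Z F x) - F x * phi x * w1 x)"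
    using d1_horizontal[OF derT derZ] derivation_on_uminus[OF alg derT Fphi]
      derivation_on_uminus[OF alg derZ Fphi] derivation_on_mult[OF derT FS phiS]
      derivation_on_mult[OF derZ FS phiS]
    by (simp add: zbar_real[OF F_real] imag fun_eq_iff algebra_simps)
  have imag_w1: "cnj (w1 x) = - w2 x" for x
    using cnj_eq_minus_swap[OF imag(2)] .
  have omega: "?omega =
    (\<lambda>x. w0 x - inverse (F x) * (T F x + B13 x),
     \<lambda>x. w1 x - inverse (F x) * (Z F x + B11 x),
     \<lambda>x. w2 x - inverse (F x) * (cnj (Z F x) + B12 x))"
    by (simp add: sub1_def add1_def scale1_def dfun_def zbar_real[OF F_real] theta0_def theta1_def theta1bar_def
        cfn_def fun_eq_iff algebra_simps)
  have tau: "?tau = scale1 Aphi (\<lambda>_. 0, \<lambda>x. - (F x * cnj (phi x)), F)"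
    by (simp add: conj1_def cnjf_def cfn_def F_real)
  have "d1 T Z ?D ?vt = add2 (wedge ?vt ?omega) (wedge theta0 ?tau)"
    unfolding d_vt omega tau
    apply (simp add: wedge_def add2_def scale1_def theta0_def cfn_def fun_eq_iff)
    apply (intro conjI allI)
    subgoal for x unfolding B13 Aphi using unit[of x] TF[of x] F_inverse[of x] by algebra
    subgoal for x unfolding B13 Aphi using unit[of x] TF[of x] F_inverse[of x] by algebra
    subgoal for x unfolding B11 B12 using unit[of x] F_inverse[of x] by algebra
    done
  moreover have "add1 ?omega (conj1 ?omega) = zero1"
    unfolding omega add1_conj1_eq_zero1_iff
    apply (simp add: B11 B12 B13 imag imag_w1 F_real TF_real)
    apply (intro conjI allI)
    subgoal for x using unit[of x] TF[of x] F_inverse[of x] by algebra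
    subgoal for x using unit[of x] F_inverse[of x] by algebra
    done
  ultimately show ?thesis
    unfolding tw_structure_def by blast
qed

theorem proposition4p1:
  fixes S :: "'m fn set"
    and T Z1 :: "'m fn \<Rightarrow> 'm fn"
    and D :: "'m form2"
    and omega :: "'m form1"
    and A phi F B11 B12 B13 Aphi :: "'m fn"
  assumes alg: "function_algebra S"
    and derT: "derivation_on S T" and derZ: "derivation_on S Z1"
    and Treal: "\<forall>f\<in>S. T (cnjf f) = cnjf (T f)"
    and orig: "tw_structure T Z1 D theta1 omega (scale1 A theta1bar)"
    and phiS: "phi \<in> S" and phi_lt: "\<forall>x. cmod (phi x) < 1"
    and F_def: "F = (\<lambda>x. complex_of_real ((1 - (cmod (phi x))\<^sup>2) powr (-1/2)))"
    and FS: "F \<in> S"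
    and B11_def: "B11 = (\<lambda>x. (F x)\<^sup>2 * (- 2 * Z1 F x
        - cnj (phi x) * F x * evZ1b (conj1 omega) x
        + cnj (phi x) * F x * evZ1b omega x
        - F x * zbar Z1 (cnjf phi) x
        - cnj (phi x) * F x * Z1 phi x
        - 2 * cnj (phi x) * zbar Z1 F x
        - complex_of_real ((cmod (phi x))\<^sup>2) * F x * evZ1 omega x
        + complex_of_real ((cmod (phi x))\<^sup>2) * F x * evZ1 (conj1 omega) x))"
    and B12_def: "B12 = (\<lambda>x. (F x)\<^sup>2 * (2 * complex_of_real ((cmod (phi x))\<^sup>2) * zbar Z1 F x
        + phi x * F x * evZ1 omega x
        - phi x * F x * evZ1 (conj1 omega) x
        + F x * Z1 phi x
        + phi x * F x * zbar Z1 (cnjf phi) x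
        + 2 * phi x * Z1 F x
        + complex_of_real ((cmod (phi x))\<^sup>2) * F x * evZ1b (conj1 omega) x
        - complex_of_real ((cmod (phi x))\<^sup>2) * F x * evZ1b omega x))"
    and B13_def: "B13 = (\<lambda>x. (F x)^3 * (- cnj (phi x) * (T phi x
          + phi x * evT omega x - phi x * evT (conj1 omega) x)
        + cnj (phi x) * A x - phi x * cnj (A x)))"
    and Aphi_def: "Aphi = (\<lambda>x. A x - (F x)\<^sup>2 * (T phi x + phi x * evT omega x
        - phi x * evT (conj1 omega) x + (phi x)\<^sup>2 * cnj (A x)
        - complex_of_real ((cmod (phi x))\<^sup>2) * A x))"
  shows "tw_connection T Z1 D (scale1 F (sub1 theta1 (scale1 phi theta1bar))) =
           sub1 (sub1 omega (scale1 (\<lambda>x. inverse (F x)) (dfun T Z1 F)))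
                (scale1 (\<lambda>x. inverse (F x))
                   (add1 (add1 (scale1 B11 theta1) (scale1 B12 theta1bar)) (scale1 B13 theta0)))
       \<and> tw_torsion T Z1 D (scale1 F (sub1 theta1 (scale1 phi theta1bar))) =
           scale1 Aphi (conj1 (scale1 F (sub1 theta1 (scale1 phi theta1bar))))"
proof -
  obtain w0 w1 w2 where omega: "omega = (w0, w1, w2)" by (cases omega) auto
  have D: "D = (\<lambda>x. - w0 x, A, w2)"
    using tw_structure_theta1_dtheta1[OF derT derZ orig] by (simp add: omega evT_def evZ1b_def)
  have imag: "cnj (w0 x) = - w0 x" "cnj (w2 x) = - w1 x" for x
    using orig by (simp_all add: tw_structure_def omega add1_conj1_eq_zero1_iff)
  have unit: "(F x)\<^sup>2 * (1 - phi x * cnj (phi x)) = 1" for x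
    unfolding F_def using powr_neg_half_norm_sq phi_lt by blast
  have imag_w1: "cnj (w1 x) = - w2 x" for x
    using cnj_eq_minus_swap[OF imag(2)] .
  have F_real: "cnj (F x) = F x" for x
    by (simp add: F_def)
  have vt: "scale1 F (sub1 theta1 (scale1 phi theta1bar)) = (cfn 0, F, \<lambda>x. - (F x * phi x))"
    by (simp add: scale1_def sub1_def add1_def theta1_def theta1bar_def cfn_def)
  have nondeg: "F x * cnj (F x) \<noteq> - (F x * phi x) * cnj (- (F x * phi x))" for x
    using unit[of x] by (auto simp: F_real power2_eq_square algebra_simps)
  show ?thesis
    unfolding vt
  proof (rule tw_structure_determines[OF nondeg], unfold D omega,
      rule tw_structure_rescaled_coframe[OF alg derT derZ phiS FS _ imag F_real unit])
    show "T (\<lambda>x. cnj (phi x)) = (\<lambda>x. cnj (T phi x))"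
      using Treal phiS by (simp add: cnjf_def)
  qed (simp_all add: B11_def B12_def B13_def Aphi_def omega conj1_def evT_def evZ1_def evZ1b_def
      cnjf_def imag imag_w1 zbar_cnj zbar_real[OF F_real] complex_norm_square algebra_simps
      del: of_real_power)
qed

end
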